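(* If \(A\subseteq\operatorname{Homeo}_+(I)\) is a geometrically fast set of positive bump functions, then there is a geometrically fast set \(B\subseteq\operatorname{Homeo}_+(I)\) of positive bumps with \(A\subseteq B\) such that \(B\) has no isolated elements. Moreover, if \(A\) is finite, then \(B\) can be taken to be finite.
   Context: \(I=[0,1]\), homeomorphisms act on the right. Support \(\operatorname{supt}(f)=\{t: tf\neq t\}\). A left (right) transition point of \(f\) is \(t\notin\operatorname{supt}(f)\) such that \((t,t+\epsilon)\) (resp. \((t-\epsilon,t)\)) meets \(\operatorname{supt}(f)\) for every \(\epsilon>0\); a transition point of a set is one of some element. A positive bump is an element of \(\operatorname{Homeo}_+(I)\) whose support is a single open interval on which \(ta>t\). A set \(A\) of bumps is geometrically proper if no point is a left transition point of two distinct elements, nor a right transition point of two distinct elements. A marking assigns to each \(a\in A\) a marker \(t\in\operatorname{supt}(a)\); for \(a\) with support \((x,y)\) its feet are \(\operatorname{src}(a)=(x,t)\) and \(\operatorname{dest}(a)=[ta,y)\). \(A\) is geometrically fast if it is geometrically proper and has a marking for which all feet of all elements are pairwise disjoint. An element of \(A\) is isolated (in \(A\)) if its support contains no transition point of \(A\). *)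

theory Defs
  imports "HOL-Analysis.Analysis"
begin

text \<open>Elements of Homeo_+(I), I = [0,1], are represented as functions real => real
  (acting on the right: t f is written f t). To get a canonical representative
  we require f to be the identity outside I.\<close>

definition Homeo_plus :: "(real \<Rightarrow> real) set" where
  "Homeo_plus = {f. (\<exists>g. homeomorphism {0..1} {0..1} f g)
                    \<and> strict_mono_on {0..1} f
                    \<and> (\<forall>t. t \<notin> {0..1} \<longrightarrow> f t = t)}"

definition supt :: "(real \<Rightarrow> real) \<Rightarrow> real set" where
  "supt f = {t \<in> {0..1}. f t \<noteq> t}"

definition left_transition_point :: "(real \<Rightarrow> real) \<Rightarrow> real \<Rightarrow> bool" where
  "left_transition_point f t \<longleftrightarrow> t \<notin> supt f \<and>
     (\<forall>\<epsilon>>0. {t<..<t+\<epsilon>} \<inter> supt f \<noteq> {})"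

definition right_transition_point :: "(real \<Rightarrow> real) \<Rightarrow> real \<Rightarrow> bool" where
  "right_transition_point f t \<longleftrightarrow> t \<notin> supt f \<and>
     (\<forall>\<epsilon>>0. {t-\<epsilon><..<t} \<inter> supt f \<noteq> {})"

definition transition_point :: "(real \<Rightarrow> real) \<Rightarrow> real \<Rightarrow> bool" where
  "transition_point f t \<longleftrightarrow> left_transition_point f t \<or> right_transition_point f t"

definition set_transition_point :: "(real \<Rightarrow> real) set \<Rightarrow> real \<Rightarrow> bool" where
  "set_transition_point A t \<longleftrightarrow> (\<exists>f\<in>A. transition_point f t)"

definition positive_bump :: "(real \<Rightarrow> real) \<Rightarrow> bool" where
  "positive_bump f \<longleftrightarrow> f \<in> Homeo_plus \<and>
     (\<exists>x y. x < y \<and> supt f = {x<..<y} \<and> (\<forall>t\<in>{x<..<y}. t < f t))"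

definition geometrically_proper :: "(real \<Rightarrow> real) set \<Rightarrow> bool" where
  "geometrically_proper A \<longleftrightarrow>
     (\<forall>a\<in>A. \<forall>b\<in>A. \<forall>t. left_transition_point a t \<and> left_transition_point b t \<longrightarrow> a = b) \<and>
     (\<forall>a\<in>A. \<forall>b\<in>A. \<forall>t. right_transition_point a t \<and> right_transition_point b t \<longrightarrow> a = b)"

text \<open>For a bump with support (x,y): x = Inf of support, y = Sup of support.\<close>

definition src_foot :: "(real \<Rightarrow> real) \<Rightarrow> real \<Rightarrow> real set" where
  "src_foot a m = {Inf (supt a)<..<m}"

definition dest_foot :: "(real \<Rightarrow> real) \<Rightarrow> real \<Rightarrow> real set" where
  "dest_foot a m = {a m..<Sup (supt a)}"

definition geometrically_fast :: "(real \<Rightarrow> real) set \<Rightarrow> bool" where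
  "geometrically_fast A \<longleftrightarrow> geometrically_proper A \<and>
     (\<exists>mk :: (real \<Rightarrow> real) \<Rightarrow> real.
        (\<forall>a\<in>A. mk a \<in> supt a) \<and>
        (\<forall>a\<in>A. \<forall>b\<in>A.
           (a \<noteq> b \<longrightarrow> src_foot a (mk a) \<inter> src_foot b (mk b) = {}) \<and>
           (a \<noteq> b \<longrightarrow> dest_foot a (mk a) \<inter> dest_foot b (mk b) = {}) \<and>
           src_foot a (mk a) \<inter> dest_foot b (mk b) = {}))"

definition isolated_elem :: "(real \<Rightarrow> real) \<Rightarrow> (real \<Rightarrow> real) set \<Rightarrow> bool" where
  "isolated_elem a A \<longleftrightarrow> a \<in> A \<and> (\<forall>t\<in>supt a. \<not> set_transition_point A t)"

end

theory Submission
  imports Defs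
begin

text \<open>Fix a fast marking \<open>mk\<close> of \<open>A\<close>. For every \<open>a \<in> A\<close> the gap \<open>(mk a, a (mk a))\<close>
  between the two feet of \<open>a\<close> lies in \<open>supt a\<close>. If \<open>a\<close> is isolated, any other element whose
  support meets \<open>supt a\<close> has support strictly containing it, and disjointness of feet then keeps
  its feet outside the gap; moreover the gaps (indeed the supports) of distinct isolated
  elements are disjoint. Into the gap of each isolated element we insert two overlapping
  piecewise linear bumps with four disjoint feet. Their endpoints lie in \<open>supt a\<close>, where no
  endpoint of an element of \<open>A\<close> lies, so the enlarged set is still geometrically fast, and now
  neither \<open>a\<close> nor the two new bumps are isolated.\<close>

abbreviation bump_start :: "(real \<Rightarrow> real) \<Rightarrow> real" where
  "bump_start f \<equiv> Inf (supt f)"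

abbreviation bump_end :: "(real \<Rightarrow> real) \<Rightarrow> real" where
  "bump_end f \<equiv> Sup (supt f)"

lemma left_boundary_Ioo_iff:
  fixes x y t :: real
  assumes "x < y"
  shows "t \<notin> {x<..<y} \<and> (\<forall>e>0. {t<..<t+e} \<inter> {x<..<y} \<noteq> {}) \<longleftrightarrow> t = x"
proof
  assume "t = x"
  moreover have "x + min e (y - x) / 2 \<in> {x<..<x+e} \<inter> {x<..<y}" if "e > 0" for e
    using assms that by (auto simp: min_def field_simps)
  ultimately show "t \<notin> {x<..<y} \<and> (\<forall>e>0. {t<..<t+e} \<inter> {x<..<y} \<noteq> {})" by fastforce
next
  assume "t \<notin> {x<..<y} \<and> (\<forall>e>0. {t<..<t+e} \<inter> {x<..<y} \<noteq> {})"
  moreover have "(if t < x then x - t else 1) > 0" by auto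
  ultimately obtain s where "s \<in> {t<..<t + (if t < x then x - t else 1)}" "s \<in> {x<..<y}" "t \<notin> {x<..<y}"
    by blast
  then show "t = x" by (auto split: if_splits)
qed

lemma right_boundary_Ioo_iff:
  fixes x y t :: real
  assumes "x < y"
  shows "t \<notin> {x<..<y} \<and> (\<forall>e>0. {t-e<..<t} \<inter> {x<..<y} \<noteq> {}) \<longleftrightarrow> t = y"
proof
  assume "t = y"
  moreover have "y - min e (y - x) / 2 \<in> {y-e<..<y} \<inter> {x<..<y}" if "e > 0" for e
    using assms that by (auto simp: min_def field_simps)
  ultimately show "t \<notin> {x<..<y} \<and> (\<forall>e>0. {t-e<..<t} \<inter> {x<..<y} \<noteq> {})" by fastforce
next
  assume "t \<notin> {x<..<y} \<and> (\<forall>e>0. {t-e<..<t} \<inter> {x<..<y} \<noteq> {})"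
  moreover have "(if y < t then t - y else 1) > 0" by auto
  ultimately obtain s where "s \<in> {t - (if y < t then t - y else 1)<..<t}" "s \<in> {x<..<y}" "t \<notin> {x<..<y}"
    by blast
  then show "t = y" by (auto split: if_splits)
qed

lemma positive_bump_supt:
  assumes "positive_bump f"
  shows "supt f = {bump_start f<..<bump_end f}" "bump_start f < bump_end f"
  using assms unfolding positive_bump_def by auto

lemma positive_bump_mem_supt_iff:
  "positive_bump f \<Longrightarrow> t \<in> supt f \<longleftrightarrow> bump_start f < t \<and> t < bump_end f"
  using positive_bump_supt(1)[of f] by (metis greaterThanLessThan_iff)

lemma positive_bump_bounds:
  assumes "positive_bump f"
  shows "0 \<le> bump_start f" "bump_end f \<le> 1"
proof -
  have "supt f \<subseteq> {0..1}" unfolding supt_def by auto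
  then show "0 \<le> bump_start f" "bump_end f \<le> 1"
    using positive_bump_supt[OF assms] greaterThanLessThan_subseteq_atLeastAtMost_iff by metis+
qed

lemma left_transition_point_bump_iff:
  "positive_bump f \<Longrightarrow> left_transition_point f t \<longleftrightarrow> t = bump_start f"
  unfolding left_transition_point_def by (metis positive_bump_supt left_boundary_Ioo_iff)

lemma right_transition_point_bump_iff:
  "positive_bump f \<Longrightarrow> right_transition_point f t \<longleftrightarrow> t = bump_end f"
  unfolding right_transition_point_def by (metis positive_bump_supt right_boundary_Ioo_iff)

lemma geometrically_proper_bumps_iff:
  assumes "\<forall>a\<in>A. positive_bump a"
  shows "geometrically_proper A \<longleftrightarrow> inj_on bump_start A \<and> inj_on bump_end A"
  using assms unfolding geometrically_proper_def inj_on_def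
  by (auto simp: left_transition_point_bump_iff right_transition_point_bump_iff)

lemma set_transition_point_bumps_iff:
  assumes "\<forall>a\<in>A. positive_bump a"
  shows "set_transition_point A t \<longleftrightarrow> (\<exists>c\<in>A. t = bump_start c \<or> t = bump_end c)"
  using assms unfolding set_transition_point_def transition_point_def
  by (auto simp: left_transition_point_bump_iff right_transition_point_bump_iff)

lemma positive_bump_marker_image:
  assumes "positive_bump f" "m \<in> supt f"
  shows "m < f m" "f m < bump_end f"
proof -
  obtain x y where xy: "x < y" "supt f = {x<..<y}" "\<forall>t\<in>{x<..<y}. t < f t"
    and mono: "strict_mono_on {0..1} f"
    using assms(1) unfolding positive_bump_def Homeo_plus_def by blast
  have m: "x < m" "m < y" using xy assms(2) by auto
  have "0 \<le> x" "y \<le> 1" using positive_bump_bounds[OF assms(1)] xy by auto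
  moreover have "y \<notin> supt f" using xy by auto
  ultimately have "f y = y" using xy(1) by (simp add: supt_def)
  moreover have "f m < f y" using mono m \<open>0 \<le> x\<close> \<open>y \<le> 1\<close> by (simp add: strict_mono_on_def)
  ultimately show "f m < bump_end f" using xy(1,2) by simp
  show "m < f m" using xy(3) m by simp
qed

lemma positive_bump_feet_subset_supt:
  assumes "positive_bump f" "m \<in> supt f"
  shows "src_foot f m \<union> dest_foot f m \<subseteq> supt f"
proof -
  have "bump_start f < m" "m < f m" "f m < bump_end f"
    using assms positive_bump_mem_supt_iff positive_bump_marker_image by blast+
  then show ?thesis
    unfolding src_foot_def dest_foot_def positive_bump_mem_supt_iff[OF assms(1)] subset_iff by auto
qed

definition fast_marking :: "(real \<Rightarrow> real) set \<Rightarrow> ((real \<Rightarrow> real) \<Rightarrow> real) \<Rightarrow> bool" where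
  "fast_marking A mk \<longleftrightarrow> (\<forall>a\<in>A. mk a \<in> supt a) \<and>
     (\<forall>a\<in>A. \<forall>b\<in>A.
        (a \<noteq> b \<longrightarrow> src_foot a (mk a) \<inter> src_foot b (mk b) = {}) \<and>
        (a \<noteq> b \<longrightarrow> dest_foot a (mk a) \<inter> dest_foot b (mk b) = {}) \<and>
        src_foot a (mk a) \<inter> dest_foot b (mk b) = {})"

lemma geometrically_fast_iff:
  "geometrically_fast A \<longleftrightarrow> geometrically_proper A \<and> (\<exists>mk. fast_marking A mk)"
  unfolding geometrically_fast_def fast_marking_def ..

lemma isolated_elem_supt_disjoint:
  assumes bumps: "\<forall>c\<in>A. positive_bump c" and "geometrically_proper A"
    and "isolated_elem a A" "isolated_elem b A" "a \<noteq> b"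
  shows "supt a \<inter> supt b = {}"
proof (rule ccontr)
  assume "supt a \<inter> supt b \<noteq> {}"
  moreover have "a \<in> A" "b \<in> A" "bump_start a \<notin> supt b" "bump_start b \<notin> supt a"
    using assms(3,4) bumps by (auto simp: isolated_elem_def set_transition_point_bumps_iff)
  ultimately have "bump_start a = bump_start b"
    using bumps positive_bump_mem_supt_iff[of a] positive_bump_mem_supt_iff[of b] by auto
  then show False
    using \<open>a \<in> A\<close> \<open>b \<in> A\<close> \<open>a \<noteq> b\<close> assms(2) bumps
    by (auto simp: geometrically_proper_bumps_iff inj_on_def)
qed

lemma isolated_elem_gap_avoids_feet:
  assumes bumps: "\<forall>c\<in>A. positive_bump c" and "geometrically_proper A"
    and mk: "fast_marking A mk" and iso: "isolated_elem a A" and "c \<in> A"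
  shows "(src_foot c (mk c) \<union> dest_foot c (mk c)) \<inter> {mk a<..<a (mk a)} = {}"
proof -
  have "a \<in> A" using iso by (simp add: isolated_elem_def)
  have mk_supt: "mk a \<in> supt a" "mk c \<in> supt c" and
    src_disj: "c \<noteq> a \<Longrightarrow> src_foot c (mk c) \<inter> src_foot a (mk a) = {}" and
    dest_disj: "c \<noteq> a \<Longrightarrow> dest_foot c (mk c) \<inter> dest_foot a (mk a) = {}"
    using mk \<open>a \<in> A\<close> \<open>c \<in> A\<close> unfolding fast_marking_def by auto
  note a = positive_bump_mem_supt_iff[of a] positive_bump_supt(2)[of a] positive_bump_marker_image[of a "mk a"]
  note c = positive_bump_mem_supt_iff[of c] positive_bump_supt(2)[of c] positive_bump_marker_image[of c "mk c"]
  consider "c = a" | "supt c \<inter> supt a = {}" | "c \<noteq> a" "supt c \<inter> supt a \<noteq> {}" by blast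
  then show ?thesis
  proof cases
    case 1
    then show ?thesis by (auto simp: src_foot_def dest_foot_def)
  next
    case 2
    then show ?thesis
      using positive_bump_feet_subset_supt[of c "mk c"] a mk_supt bumps \<open>a \<in> A\<close> \<open>c \<in> A\<close> by auto
  next
    case 3
    have "bump_start c \<notin> supt a" "bump_end c \<notin> supt a"
      using iso \<open>c \<in> A\<close> bumps by (auto simp: isolated_elem_def set_transition_point_bumps_iff)
    moreover have "bump_start c \<noteq> bump_start a" "bump_end c \<noteq> bump_end a"
      using assms(2) bumps \<open>a \<in> A\<close> \<open>c \<in> A\<close> 3(1)
      by (auto simp: geometrically_proper_bumps_iff inj_on_def)
    ultimately have nested: "bump_start c < bump_start a" "bump_end a < bump_end c"
      using 3(2) a c bumps \<open>a \<in> A\<close> \<open>c \<in> A\<close> by auto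
    \<comment> \<open>Disjointness from the feet of \<open>a\<close> pushes the feet of \<open>c\<close> out of \<open>supt a\<close>.\<close>
    have "mk c \<le> bump_start a"
    proof (rule ccontr)
      assume "\<not> mk c \<le> bump_start a"
      then have "(bump_start a + min (mk a) (mk c)) / 2 \<in> src_foot c (mk c) \<inter> src_foot a (mk a)"
        using nested mk_supt a bumps \<open>a \<in> A\<close> by (auto simp: src_foot_def)
      then show False using src_disj 3(1) by blast
    qed
    moreover have "bump_end a \<le> c (mk c)"
    proof (rule ccontr)
      assume "\<not> bump_end a \<le> c (mk c)"
      then have "max (a (mk a)) (c (mk c)) \<in> dest_foot c (mk c) \<inter> dest_foot a (mk a)"
        using nested mk_supt a c bumps \<open>a \<in> A\<close> \<open>c \<in> A\<close> by (auto simp: dest_foot_def)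
      then show False using dest_disj 3(1) by blast
    qed
    ultimately show ?thesis
      using a mk_supt bumps \<open>a \<in> A\<close> by (auto simp: src_foot_def dest_foot_def)
  qed
qed

lemma Homeo_plus_intro:
  assumes "strict_mono f" "continuous_on {0..1} f" "f 0 = 0" "f 1 = 1"
    and "\<And>t. t \<notin> {0..1} \<Longrightarrow> f t = t"
  shows "f \<in> Homeo_plus"
proof -
  have "f ` {0..1} = {0..1}"
  proof
    have "f 0 \<le> f t" "f t \<le> f 1" if "t \<in> {0..1}" for t
      using that strict_mono_less_eq[OF assms(1)] by auto
    then show "f ` {0..1} \<subseteq> {0..1}"
      using assms(3,4) by auto
    show "{0..1} \<subseteq> f ` {0..1}"
    proof
      fix y :: real
      assume "y \<in> {0..1}"
      then obtain x where "0 \<le> x" "x \<le> 1" "f x = y" using IVT'[of f 0 y 1] assms(2-4) by auto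
      then show "y \<in> f ` {0..1}" by force
    qed
  qed
  moreover have "inj_on f {0..1}"
    using assms(1) strict_mono_imp_inj_on by blast
  ultimately obtain g where "homeomorphism {0..1} {0..1} f g"
    using homeomorphism_compact[OF compact_Icc assms(2)] by blast
  moreover have "strict_mono_on {0..1} f"
    using assms(1) by (simp add: strict_mono_def strict_mono_on_def)
  ultimately show ?thesis
    using assms(5) unfolding Homeo_plus_def by blast
qed

text \<open>The graph of \<open>pl_bump p h\<close> is the polygon through \<open>(p, p)\<close>, \<open>(p + h, p + 3 h)\<close> and
  \<open>(p + 4 h, p + 4 h)\<close>: with marker \<open>p + h\<close> its feet are \<open>(p, p + h)\<close> and \<open>[p + 3 h, p + 4 h)\<close>.\<close>

definition pl_bump :: "real \<Rightarrow> real \<Rightarrow> real \<Rightarrow> real" where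
  "pl_bump p h t = t + max 0 (min (2 * (t - p)) (2/3 * (p + 4 * h - t)))"

lemma pl_bump_fixed: "t \<le> p \<or> p + 4 * h \<le> t \<Longrightarrow> pl_bump p h t = t"
  unfolding pl_bump_def by (auto simp: max_def min_def)

lemma pl_bump_gt: "p < t \<Longrightarrow> t < p + 4 * h \<Longrightarrow> t < pl_bump p h t"
  unfolding pl_bump_def by (auto simp: max_def min_def)

lemma pl_bump_marker: "0 < h \<Longrightarrow> pl_bump p h (p + h) = p + 3 * h"
  unfolding pl_bump_def by (auto simp: max_def min_def)

lemma supt_pl_bump:
  assumes "0 \<le> p" "p + 4 * h \<le> 1"
  shows "supt (pl_bump p h) = {p<..<p + 4 * h}"
proof (intro set_eqI iffI)
  fix t
  assume "t \<in> supt (pl_bump p h)"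
  then show "t \<in> {p<..<p + 4 * h}"
    using pl_bump_fixed[of t p h] unfolding supt_def by force
next
  fix t
  assume "t \<in> {p<..<p + 4 * h}"
  then show "t \<in> supt (pl_bump p h)"
    using pl_bump_gt[of p t h] assms unfolding supt_def by auto
qed

lemma positive_bump_pl_bump:
  assumes "0 \<le> p" "p + 4 * h \<le> 1" "0 < h"
  shows "positive_bump (pl_bump p h)"
proof -
  have "strict_mono (pl_bump p h)"
    using assms(3) unfolding strict_mono_def pl_bump_def by (auto simp: max_def min_def field_simps)
  moreover have "continuous_on {0..1} (pl_bump p h)"
    unfolding pl_bump_def by (intro continuous_intros)
  ultimately have "pl_bump p h \<in> Homeo_plus"
    using assms pl_bump_fixed[of _ p h] by (intro Homeo_plus_intro) auto
  then show ?thesis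
    unfolding positive_bump_def using assms supt_pl_bump[OF assms(1,2)] pl_bump_gt[of p _ h]
    by (intro conjI exI[of _ p] exI[of _ "p + 4 * h"]) auto
qed

definition quarter_point :: "(real \<Rightarrow> real) \<Rightarrow> real" where
  "quarter_point f = (3 * bump_start f + bump_end f) / 4"

lemma pl_bump_shape:
  assumes "0 \<le> p" "p + 4 * h \<le> 1" "0 < h"
  shows "bump_start (pl_bump p h) = p" "bump_end (pl_bump p h) = p + 4 * h"
    "quarter_point (pl_bump p h) \<in> supt (pl_bump p h)"
    "src_foot (pl_bump p h) (quarter_point (pl_bump p h)) = {p<..<p + h}"
    "dest_foot (pl_bump p h) (quarter_point (pl_bump p h)) = {p + 3 * h..<p + 4 * h}"
proof -
  have supt: "supt (pl_bump p h) = {p<..<p + 4 * h}" using supt_pl_bump[OF assms(1,2)] .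
  then have "quarter_point (pl_bump p h) = p + h"
    using assms(3) by (simp add: quarter_point_def field_simps)
  with supt show "bump_start (pl_bump p h) = p" "bump_end (pl_bump p h) = p + 4 * h"
    "quarter_point (pl_bump p h) \<in> supt (pl_bump p h)"
    "src_foot (pl_bump p h) (quarter_point (pl_bump p h)) = {p<..<p + h}"
    "dest_foot (pl_bump p h) (quarter_point (pl_bump p h)) = {p + 3 * h..<p + 4 * h}"
    using assms(3) pl_bump_marker[OF assms(3)] by (simp_all add: src_foot_def dest_foot_def)
qed

text \<open>Two overlapping bumps with supports \<open>(m + h, m + 5 h)\<close> and \<open>(m + 3 h, m + 7 h)\<close>: each
  support contains an endpoint of the other, while the four feet \<open>(m + h, m + 2 h)\<close>,
  \<open>[m + 4 h, m + 5 h)\<close>, \<open>(m + 3 h, m + 4 h)\<close>, \<open>[m + 6 h, m + 7 h)\<close> are pairwise disjoint.\<close>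

definition filler_pair :: "real \<Rightarrow> real \<Rightarrow> (real \<Rightarrow> real) set" where
  "filler_pair m h = {pl_bump (m + h) h, pl_bump (m + 3 * h) h}"

context
  fixes m h :: real
  assumes filler: "0 \<le> m" "0 < h" "m + 8 * h \<le> 1"
begin

private lemma filler_shape:
  assumes "k \<in> {1, 3}"
  shows "positive_bump (pl_bump (m + k * h) h)"
    "bump_start (pl_bump (m + k * h) h) = m + k * h"
    "bump_end (pl_bump (m + k * h) h) = m + (k + 4) * h"
    "quarter_point (pl_bump (m + k * h) h) \<in> supt (pl_bump (m + k * h) h)"
    "src_foot (pl_bump (m + k * h) h) (quarter_point (pl_bump (m + k * h) h))
       = {m + k * h<..<m + (k + 1) * h}"
    "dest_foot (pl_bump (m + k * h) h) (quarter_point (pl_bump (m + k * h) h))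
       = {m + (k + 3) * h..<m + (k + 4) * h}"
proof -
  have "0 \<le> m + k * h" "m + k * h + 4 * h \<le> 1" using assms filler by auto
  from positive_bump_pl_bump[OF this filler(2)] pl_bump_shape[OF this filler(2)]
  show "positive_bump (pl_bump (m + k * h) h)"
    "bump_start (pl_bump (m + k * h) h) = m + k * h"
    "bump_end (pl_bump (m + k * h) h) = m + (k + 4) * h"
    "quarter_point (pl_bump (m + k * h) h) \<in> supt (pl_bump (m + k * h) h)"
    "src_foot (pl_bump (m + k * h) h) (quarter_point (pl_bump (m + k * h) h))
       = {m + k * h<..<m + (k + 1) * h}"
    "dest_foot (pl_bump (m + k * h) h) (quarter_point (pl_bump (m + k * h) h))
       = {m + (k + 3) * h..<m + (k + 4) * h}"
    by (simp_all add: algebra_simps)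
qed

private lemmas fillers = filler_shape[of 1, simplified] filler_shape[of 3, simplified]

lemma filler_pair_bump:
  assumes "c \<in> filler_pair m h"
  shows "positive_bump c" "{bump_start c..bump_end c} \<subseteq> {m<..<m + 8 * h}"
  using assms filler fillers by (auto simp: filler_pair_def)

lemma geometrically_proper_filler_pair: "geometrically_proper (filler_pair m h)"
  using filler fillers
  by (auto simp: filler_pair_def geometrically_proper_bumps_iff)

lemma fast_marking_filler_pair: "fast_marking (filler_pair m h) quarter_point"
  using filler fillers by (auto simp: filler_pair_def fast_marking_def)

lemma filler_pair_not_isolated:
  assumes "c \<in> filler_pair m h"
  shows "\<not> isolated_elem c (filler_pair m h)"
  using assms filler fillers
  by (auto simp: filler_pair_def isolated_elem_def set_transition_point_bumps_iff
      positive_bump_mem_supt_iff)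

end

lemma inj_on_UN_separated:
  assumes "\<And>i. i \<in> I \<Longrightarrow> inj_on f (C i)"
    and "\<And>i j c d. i \<in> I \<Longrightarrow> j \<in> I \<Longrightarrow> c \<in> C i \<Longrightarrow> d \<in> C j \<Longrightarrow> f c = f d \<Longrightarrow> i = j"
  shows "inj_on f (\<Union>i\<in>I. C i)"
proof (rule inj_onI)
  fix c d
  assume "c \<in> (\<Union>i\<in>I. C i)" "d \<in> (\<Union>i\<in>I. C i)" and eq: "f c = f d"
  then obtain i j where ij: "i \<in> I" "j \<in> I" "c \<in> C i" "d \<in> C j" by blast
  with assms(2)[OF ij eq] have "d \<in> C i" by simp
  with assms(1)[OF ij(1)] ij(3) eq show "c = d" by (simp add: inj_on_eq_iff)
qed

lemma positive_bump_ends_mem: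
  "positive_bump c \<Longrightarrow> bump_start c \<in> {bump_start c..bump_end c} \<and> bump_end c \<in> {bump_start c..bump_end c}"
  using positive_bump_supt(2)[of c] by auto

lemma geometrically_proper_UN:
  assumes bumps: "\<forall>i\<in>I. \<forall>c\<in>C i. positive_bump c \<and> {bump_start c..bump_end c} \<subseteq> U i"
    and disj: "disjoint_family_on U I"
    and proper: "\<forall>i\<in>I. geometrically_proper (C i)"
  shows "geometrically_proper (\<Union>i\<in>I. C i)"
proof -
  have same_piece: "i = j"
    if "i \<in> I" "j \<in> I" "c \<in> C i" "d \<in> C j"
      "bump_start c = bump_start d \<or> bump_end c = bump_end d" for i j c d
  proof -
    have "{bump_start c..bump_end c} \<subseteq> U i" "{bump_start d..bump_end d} \<subseteq> U j"
      "positive_bump c" "positive_bump d"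
      using bumps that by auto
    then have "U i \<inter> U j \<noteq> {}"
      using that(5) positive_bump_ends_mem[of c] positive_bump_ends_mem[of d] by (metis disjoint_iff subsetD)
    then show "i = j"
      using disj that(1,2) unfolding disjoint_family_on_def by blast
  qed
  have "inj_on bump_start (C i) \<and> inj_on bump_end (C i)" if "i \<in> I" for i
    using geometrically_proper_bumps_iff[of "C i"] proper bumps that by simp
  then have "inj_on bump_start (\<Union>i\<in>I. C i)" "inj_on bump_end (\<Union>i\<in>I. C i)"
    using same_piece by (intro inj_on_UN_separated; blast)+
  then show ?thesis
    using bumps by (subst geometrically_proper_bumps_iff) auto
qed

lemma fast_marking_UN:
  assumes bumps: "\<forall>i\<in>I. \<forall>c\<in>C i. positive_bump c \<and> {bump_start c..bump_end c} \<subseteq> U i"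
    and disj: "disjoint_family_on U I"
    and mk: "\<forall>i\<in>I. fast_marking (C i) mk"
  shows "fast_marking (\<Union>i\<in>I. C i) mk"
proof -
  have feet_in_piece: "src_foot c (mk c) \<union> dest_foot c (mk c) \<subseteq> U i" if "i \<in> I" "c \<in> C i" for i c
  proof -
    have "mk c \<in> supt c" using mk that unfolding fast_marking_def by blast
    then have "src_foot c (mk c) \<union> dest_foot c (mk c) \<subseteq> supt c"
      using positive_bump_feet_subset_supt bumps that by blast
    also have "\<dots> \<subseteq> {bump_start c..bump_end c}"
      using bumps that by (auto simp: positive_bump_mem_supt_iff)
    also have "\<dots> \<subseteq> U i"
      using bumps that by blast
    finally show ?thesis .
  qed
  show ?thesis
    unfolding fast_marking_def
  proof (rule conjI; intro ballI)
    fix c assume "c \<in> (\<Union>i\<in>I. C i)"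
    then show "mk c \<in> supt c" using mk unfolding fast_marking_def by blast
  next
    fix c d assume "c \<in> (\<Union>i\<in>I. C i)" "d \<in> (\<Union>i\<in>I. C i)"
    then obtain i j where ij: "i \<in> I" "j \<in> I" "c \<in> C i" "d \<in> C j" by blast
    show "(c \<noteq> d \<longrightarrow> src_foot c (mk c) \<inter> src_foot d (mk d) = {}) \<and>
          (c \<noteq> d \<longrightarrow> dest_foot c (mk c) \<inter> dest_foot d (mk d) = {}) \<and>
          src_foot c (mk c) \<inter> dest_foot d (mk d) = {}"
    proof (cases "i = j")
      case True
      then show ?thesis using mk ij unfolding fast_marking_def by blast
    next
      case False
      then have "U i \<inter> U j = {}" using disj ij unfolding disjoint_family_on_def by blast
      then show ?thesis using feet_in_piece[OF ij(1,3)] feet_in_piece[OF ij(2,4)] by blast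
    qed
  qed
qed

lemma inj_on_Un_separated:
  "inj_on f A \<Longrightarrow> inj_on f C \<Longrightarrow> \<forall>a\<in>A. \<forall>c\<in>C. f a \<noteq> f c \<Longrightarrow> inj_on f (A \<union> C)"
  unfolding inj_on_def by (metis Un_iff)

lemma geometrically_fast_Un:
  assumes bumps: "\<forall>c\<in>A \<union> C. positive_bump c"
    and proper: "geometrically_proper A" "geometrically_proper C"
    and marking: "fast_marking A mA" "fast_marking C mC"
    and ends: "\<forall>a\<in>A. \<forall>c\<in>C. bump_start a \<noteq> bump_start c \<and> bump_end a \<noteq> bump_end c"
    and feet: "\<forall>a\<in>A. \<forall>c\<in>C. (src_foot a (mA a) \<union> dest_foot a (mA a)) \<inter>
                                (src_foot c (mC c) \<union> dest_foot c (mC c)) = {}"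
  shows "geometrically_fast (A \<union> C)"
proof -
  have "A \<inter> C = {}" using ends by blast
  have "\<forall>c\<in>A. positive_bump c" "\<forall>c\<in>C. positive_bump c" using bumps by auto
  have "inj_on bump_start A \<and> inj_on bump_end A"
    using proper(1) geometrically_proper_bumps_iff[OF \<open>\<forall>c\<in>A. positive_bump c\<close>] by simp
  moreover have "inj_on bump_start C \<and> inj_on bump_end C"
    using proper(2) geometrically_proper_bumps_iff[OF \<open>\<forall>c\<in>C. positive_bump c\<close>] by simp
  ultimately have "inj_on bump_start (A \<union> C) \<and> inj_on bump_end (A \<union> C)"
    using ends by (simp add: inj_on_Un_separated)
  then have "geometrically_proper (A \<union> C)"
    using geometrically_proper_bumps_iff[OF bumps] by blast
  moreover
  define mk where "mk x = (if x \<in> A then mA x else mC x)" for x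
  have "fast_marking (A \<union> C) mk"
    unfolding fast_marking_def
  proof (rule conjI; intro ballI)
    fix c
    assume "c \<in> A \<union> C"
    then show "mk c \<in> supt c"
      using marking \<open>A \<inter> C = {}\<close> by (auto simp: mk_def fast_marking_def)
  next
    fix a b
    assume "a \<in> A \<union> C" "b \<in> A \<union> C"
    then consider "a \<in> A" "b \<in> A" | "a \<in> A" "b \<in> C" | "a \<in> C" "b \<in> A" | "a \<in> C" "b \<in> C"
      by blast
    then show "(a \<noteq> b \<longrightarrow> src_foot a (mk a) \<inter> src_foot b (mk b) = {}) \<and>
               (a \<noteq> b \<longrightarrow> dest_foot a (mk a) \<inter> dest_foot b (mk b) = {}) \<and>
               src_foot a (mk a) \<inter> dest_foot b (mk b) = {}"
    proof cases
      case 1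
      then show ?thesis using marking(1) by (simp add: mk_def fast_marking_def)
    next
      case 2
      then show ?thesis using feet \<open>A \<inter> C = {}\<close> by (simp add: mk_def disjoint_iff) blast
    next
      case 3
      then show ?thesis using feet \<open>A \<inter> C = {}\<close> by (simp add: mk_def disjoint_iff) blast
    next
      case 4
      then show ?thesis using marking(2) \<open>A \<inter> C = {}\<close> by (auto simp: mk_def fast_marking_def)
    qed
  qed
  ultimately show ?thesis
    unfolding geometrically_fast_iff by blast
qed

lemma positive_bump_marker_gap:
  assumes "positive_bump a" "m \<in> supt a"
  shows "0 \<le> m" "m < a m" "a m \<le> 1" "{m<..<a m} \<subseteq> supt a"
  using assms positive_bump_marker_image[OF assms] positive_bump_bounds[OF assms(1)]
  by (auto simp: positive_bump_mem_supt_iff)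

lemma not_isolated_elem_mono:
  "\<not> isolated_elem b A \<Longrightarrow> b \<in> A \<Longrightarrow> A \<subseteq> B \<Longrightarrow> \<not> isolated_elem b B"
  unfolding isolated_elem_def set_transition_point_def by blast

definition gap_fillers :: "(real \<Rightarrow> real) set \<Rightarrow> ((real \<Rightarrow> real) \<Rightarrow> real) \<Rightarrow> (real \<Rightarrow> real) set" where
  "gap_fillers A mk = (\<Union>a\<in>{a\<in>A. isolated_elem a A}. filler_pair (mk a) ((a (mk a) - mk a) / 8))"

context
  fixes A :: "(real \<Rightarrow> real) set" and mk :: "(real \<Rightarrow> real) \<Rightarrow> real"
  assumes bumps: "\<forall>a\<in>A. positive_bump a"
    and proper: "geometrically_proper A"
    and marking: "fast_marking A mk"
begin

private lemma isolated_gap: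
  assumes "isolated_elem a A"
  shows "0 \<le> mk a" "0 < (a (mk a) - mk a) / 8" "mk a + 8 * ((a (mk a) - mk a) / 8) \<le> 1"
    "mk a + 8 * ((a (mk a) - mk a) / 8) = a (mk a)" "{mk a<..<a (mk a)} \<subseteq> supt a"
proof -
  have "a \<in> A" using assms by (simp add: isolated_elem_def)
  then have "positive_bump a" "mk a \<in> supt a"
    using bumps marking by (auto simp: fast_marking_def)
  note gap = positive_bump_marker_gap[OF this]
  show eq: "mk a + 8 * ((a (mk a) - mk a) / 8) = a (mk a)" by (simp add: field_simps)
  show "0 \<le> mk a" "0 < (a (mk a) - mk a) / 8" "mk a + 8 * ((a (mk a) - mk a) / 8) \<le> 1"
    "{mk a<..<a (mk a)} \<subseteq> supt a"
    unfolding eq using gap by auto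
qed

private lemma gap_fillers_pieces:
  "\<forall>a\<in>{a\<in>A. isolated_elem a A}. \<forall>c\<in>filler_pair (mk a) ((a (mk a) - mk a) / 8).
     positive_bump c \<and> {bump_start c..bump_end c} \<subseteq> {mk a<..<a (mk a)}"
proof (intro ballI)
  fix a c
  assume "a \<in> {a\<in>A. isolated_elem a A}" and c: "c \<in> filler_pair (mk a) ((a (mk a) - mk a) / 8)"
  then have gap: "0 \<le> mk a" "0 < (a (mk a) - mk a) / 8" "mk a + 8 * ((a (mk a) - mk a) / 8) \<le> 1"
    "mk a + 8 * ((a (mk a) - mk a) / 8) = a (mk a)"
    using isolated_gap by auto
  from filler_pair_bump[OF gap(1-3) c]
  show "positive_bump c \<and> {bump_start c..bump_end c} \<subseteq> {mk a<..<a (mk a)}"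
    unfolding gap(4) by blast
qed

private lemma isolated_gaps_disjoint:
  "disjoint_family_on (\<lambda>a. {mk a<..<a (mk a)}) {a\<in>A. isolated_elem a A}"
  using isolated_elem_supt_disjoint[OF bumps proper] isolated_gap(5)
  unfolding disjoint_family_on_def by blast

lemma gap_fillers_bump: "c \<in> gap_fillers A mk \<Longrightarrow> positive_bump c"
  using gap_fillers_pieces unfolding gap_fillers_def by blast

lemma geometrically_proper_gap_fillers: "geometrically_proper (gap_fillers A mk)"
  unfolding gap_fillers_def
  using gap_fillers_pieces isolated_gaps_disjoint geometrically_proper_filler_pair isolated_gap
  by (intro geometrically_proper_UN) auto

lemma fast_marking_gap_fillers: "fast_marking (gap_fillers A mk) quarter_point"
  unfolding gap_fillers_def
  using gap_fillers_pieces isolated_gaps_disjoint fast_marking_filler_pair isolated_gap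
  by (intro fast_marking_UN) auto

private lemma gap_fillers_in_isolated_gap:
  assumes "c \<in> gap_fillers A mk"
  obtains a where "isolated_elem a A" "{bump_start c..bump_end c} \<subseteq> {mk a<..<a (mk a)}"
  using assms gap_fillers_pieces unfolding gap_fillers_def by blast

lemma geometrically_fast_Un_gap_fillers: "geometrically_fast (A \<union> gap_fillers A mk)"
proof (rule geometrically_fast_Un[OF _ proper geometrically_proper_gap_fillers
      marking fast_marking_gap_fillers])
  show "\<forall>c\<in>A \<union> gap_fillers A mk. positive_bump c"
    using bumps gap_fillers_bump by blast
  have ends_in_gap: "bump_start c \<in> supt a \<and> bump_end c \<in> supt a"
    if "isolated_elem a A" "{bump_start c..bump_end c} \<subseteq> {mk a<..<a (mk a)}" "positive_bump c"
    for a c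
    using that positive_bump_ends_mem[OF that(3)] isolated_gap(5)[OF that(1)] by blast
  show "\<forall>b\<in>A. \<forall>c\<in>gap_fillers A mk. bump_start b \<noteq> bump_start c \<and> bump_end b \<noteq> bump_end c"
  proof (intro ballI)
    fix b c
    assume "b \<in> A" "c \<in> gap_fillers A mk"
    then obtain a where "isolated_elem a A" "{bump_start c..bump_end c} \<subseteq> {mk a<..<a (mk a)}"
      using gap_fillers_in_isolated_gap by blast
    with ends_in_gap gap_fillers_bump[OF \<open>c \<in> gap_fillers A mk\<close>]
    have "\<not> set_transition_point A (bump_start c)" "\<not> set_transition_point A (bump_end c)"
      by (auto simp: isolated_elem_def)
    with \<open>b \<in> A\<close> show "bump_start b \<noteq> bump_start c \<and> bump_end b \<noteq> bump_end c"
      by (auto simp: set_transition_point_bumps_iff[OF bumps])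
  qed
  show "\<forall>b\<in>A. \<forall>c\<in>gap_fillers A mk. (src_foot b (mk b) \<union> dest_foot b (mk b)) \<inter>
          (src_foot c (quarter_point c) \<union> dest_foot c (quarter_point c)) = {}"
  proof (intro ballI)
    fix b c
    assume "b \<in> A" "c \<in> gap_fillers A mk"
    then obtain a where a: "isolated_elem a A" "{bump_start c..bump_end c} \<subseteq> {mk a<..<a (mk a)}"
      using gap_fillers_in_isolated_gap by blast
    have "quarter_point c \<in> supt c"
      using fast_marking_gap_fillers \<open>c \<in> gap_fillers A mk\<close> unfolding fast_marking_def by blast
    then have "src_foot c (quarter_point c) \<union> dest_foot c (quarter_point c) \<subseteq> supt c"
      using positive_bump_feet_subset_supt gap_fillers_bump \<open>c \<in> gap_fillers A mk\<close> by blast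
    also have "\<dots> \<subseteq> {mk a<..<a (mk a)}"
      using a(2) gap_fillers_bump[OF \<open>c \<in> gap_fillers A mk\<close>]
      by (auto simp: positive_bump_mem_supt_iff)
    finally show "(src_foot b (mk b) \<union> dest_foot b (mk b)) \<inter>
          (src_foot c (quarter_point c) \<union> dest_foot c (quarter_point c)) = {}"
      using isolated_elem_gap_avoids_feet[OF bumps proper marking a(1) \<open>b \<in> A\<close>] by blast
  qed
qed

lemma no_isolated_elem_Un_gap_fillers:
  assumes "b \<in> A \<union> gap_fillers A mk"
  shows "\<not> isolated_elem b (A \<union> gap_fillers A mk)"
proof -
  have bumps_Un: "\<forall>c\<in>A \<union> gap_fillers A mk. positive_bump c"
    using bumps gap_fillers_bump by blast
  consider "b \<in> A" "\<not> isolated_elem b A" | "isolated_elem b A"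
    | a where "isolated_elem a A" "b \<in> filler_pair (mk a) ((a (mk a) - mk a) / 8)"
    using assms unfolding gap_fillers_def isolated_elem_def by blast
  then show ?thesis
  proof cases
    case 1
    then show ?thesis using not_isolated_elem_mono[OF 1(2) 1(1)] by blast
  next
    case 2
    note gap = isolated_gap[OF 2]
    define c where "c = pl_bump (mk b + (b (mk b) - mk b) / 8) ((b (mk b) - mk b) / 8)"
    have "c \<in> filler_pair (mk b) ((b (mk b) - mk b) / 8)"
      unfolding c_def filler_pair_def by blast
    moreover have "b \<in> {a \<in> A. isolated_elem a A}"
      using 2 by (simp add: isolated_elem_def)
    ultimately have "c \<in> A \<union> gap_fillers A mk"
      unfolding gap_fillers_def by blast
    then have "set_transition_point (A \<union> gap_fillers A mk) (bump_start c)"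
      unfolding set_transition_point_bumps_iff[OF bumps_Un] by blast
    moreover have "{bump_start c..bump_end c} \<subseteq> {mk b<..<b (mk b)}" "positive_bump c"
      using filler_pair_bump[OF gap(1-3) \<open>c \<in> filler_pair (mk b) ((b (mk b) - mk b) / 8)\<close>]
      unfolding gap(4) by blast+
    then have "bump_start c \<in> supt b"
      using gap(5) positive_bump_ends_mem[of c] by blast
    ultimately show ?thesis unfolding isolated_elem_def by blast
  next
    case 3
    have "\<not> isolated_elem b (filler_pair (mk a) ((a (mk a) - mk a) / 8))"
      using filler_pair_not_isolated isolated_gap[OF 3(1)] 3(2) by blast
    moreover have "filler_pair (mk a) ((a (mk a) - mk a) / 8) \<subseteq> A \<union> gap_fillers A mk"
      using 3(1) unfolding gap_fillers_def isolated_elem_def by blast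
    ultimately show ?thesis
      using not_isolated_elem_mono 3(2) by blast
  qed
qed

end

lemma finite_gap_fillers: "finite A \<Longrightarrow> finite (gap_fillers A mk)"
  unfolding gap_fillers_def filler_pair_def by auto

theorem proposition3p1:
  assumes "A \<subseteq> Homeo_plus"
    and "\<forall>a\<in>A. positive_bump a"
    and "geometrically_fast A"
  shows "\<exists>B. B \<subseteq> Homeo_plus \<and> (\<forall>b\<in>B. positive_bump b) \<and> geometrically_fast B
             \<and> A \<subseteq> B \<and> (\<forall>b\<in>B. \<not> isolated_elem b B)
             \<and> (finite A \<longrightarrow> finite B)"
proof -
  obtain mk where proper: "geometrically_proper A" and marking: "fast_marking A mk"
    using assms(3) unfolding geometrically_fast_iff by blast
  define B where "B = A \<union> gap_fillers A mk"
  have bumps: "\<forall>b\<in>B. positive_bump b"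
    using assms(2) gap_fillers_bump[OF assms(2) proper marking] unfolding B_def by blast
  then have "B \<subseteq> Homeo_plus"
    unfolding positive_bump_def by blast
  moreover have "geometrically_fast B" "\<forall>b\<in>B. \<not> isolated_elem b B"
    using geometrically_fast_Un_gap_fillers[OF assms(2) proper marking]
      no_isolated_elem_Un_gap_fillers[OF assms(2) proper marking]
    unfolding B_def by blast+
  moreover have "finite A \<longrightarrow> finite B"
    using finite_gap_fillers unfolding B_def by blast
  ultimately show ?thesis
    using bumps unfolding B_def by blast
qed

end
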